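(* Let $m\ge 1$, $n=2m$, and let $\gamma(X_0,X_1,\ldots,X_{m-1})\in\mathbb{F}_2[X_0,\ldots,X_{m-1}]$ be a reduced polynomial of algebraic degree $d$. Define the Boolean function $f:\mathbb{F}_2^n\to\mathbb{F}_2$ by $$f(x_0,\ldots,x_{n-1})=\sum_{i=0}^{m-1}x_ix_{i+m}+\gamma(x_0+x_m,\,x_1+x_{m+1},\,\ldots,\,x_{m-1}+x_{2m-1}).$$ Then $f$ is a bent function. Moreover, if $\gamma$ is rotation symmetric (i.e. $\gamma(X_0,X_1,\ldots,X_{m-1})=\gamma(X_1,\ldots,X_{m-1},X_0)$), then $f$ is a rotation symmetric bent function on $\mathbb{F}_2^n$. Furthermore, if $d\ge 2$, then $f$ has algebraic degree $d$.
   Context: Every Boolean function $f:\mathbb{F}_2^n\to\mathbb{F}_2$ is identified with its algebraic normal form, a reduced polynomial $\sum_{u\in\mathbb{F}_2^n}c_u\prod_{i=0}^{n-1}x_i^{u_i}$ with $c_u\in\mathbb{F}_2$ (each variable appears with exponent at most 1); its algebraic degree is the largest number of variables in a monomial with nonzero coefficient. $f$ is rotation symmetric if $f(x_1,x_2,\ldots,x_{n-1},x_0)=f(x_0,x_1,\ldots,x_{n-1})$ for all $x\in\mathbb{F}_2^n$. The Walsh transform is $\mathcal{W}_f(b)=\sum_{x\in\mathbb{F}_2^n}(-1)^{f(x)+\sum_i x_ib_i}$, and $f$ is bent if $\mathcal{W}_f(b)=\pm 2^{n/2}$ for all $b\in\mathbb{F}_2^n$. *)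

theory Defs
  imports Main
begin

text \<open>Vectors of F_2^n are modelled as functions nat => bool that vanish
outside {0..<n}; a Boolean function on F_2^n is a function
(nat => bool) => bool, only its values on vecs n matter.\<close>

definition vecs :: "nat \<Rightarrow> (nat \<Rightarrow> bool) set" where
  "vecs n = {x. \<forall>i. n \<le> i \<longrightarrow> \<not> x i}"

text \<open>A reduced polynomial in the variables X_0..X_{n-1} over F_2 is given by its
coefficient function on monomials, a monomial being the set u of indices of the
variables occurring in it.\<close>

definition is_anf :: "nat \<Rightarrow> (nat set \<Rightarrow> bool) \<Rightarrow> bool" where
  "is_anf n c \<longleftrightarrow> (\<forall>u. c u \<longrightarrow> u \<subseteq> {..<n})"

definition anf_eval :: "nat \<Rightarrow> (nat set \<Rightarrow> bool) \<Rightarrow> (nat \<Rightarrow> bool) \<Rightarrow> bool" where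
  "anf_eval n c x = odd (card {u. u \<subseteq> {..<n} \<and> c u \<and> (\<forall>i\<in>u. x i)})"

text \<open>Algebraic degree of a polynomial (the zero polynomial gets degree 0).\<close>
definition anf_degree :: "(nat set \<Rightarrow> bool) \<Rightarrow> nat" where
  "anf_degree c = Max (insert 0 (card ` {u. c u}))"

definition anf_of :: "nat \<Rightarrow> ((nat \<Rightarrow> bool) \<Rightarrow> bool) \<Rightarrow> (nat set \<Rightarrow> bool)" where
  "anf_of n f = (THE c. is_anf n c \<and> (\<forall>x\<in>vecs n. anf_eval n c x = f x))"

definition alg_degree :: "nat \<Rightarrow> ((nat \<Rightarrow> bool) \<Rightarrow> bool) \<Rightarrow> nat" where
  "alg_degree n f = anf_degree (anf_of n f)"

definition rot :: "nat \<Rightarrow> (nat \<Rightarrow> bool) \<Rightarrow> (nat \<Rightarrow> bool)" where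
  "rot n x = (\<lambda>i. if i < n then x ((i + 1) mod n) else False)"

definition rotation_symmetric :: "nat \<Rightarrow> ((nat \<Rightarrow> bool) \<Rightarrow> bool) \<Rightarrow> bool" where
  "rotation_symmetric n f \<longleftrightarrow> (\<forall>x\<in>vecs n. f (rot n x) = f x)"

definition walsh :: "nat \<Rightarrow> ((nat \<Rightarrow> bool) \<Rightarrow> bool) \<Rightarrow> (nat \<Rightarrow> bool) \<Rightarrow> int" where
  "walsh n f b = (\<Sum>x\<in>vecs n. (-1::int) ^ (of_bool (f x) + card {i. i < n \<and> x i \<and> b i}))"

definition bent :: "nat \<Rightarrow> ((nat \<Rightarrow> bool) \<Rightarrow> bool) \<Rightarrow> bool" where
  "bent n f \<longleftrightarrow> (\<forall>b\<in>vecs n. \<bar>walsh n f b\<bar> = 2 ^ (n div 2))"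

end

theory Submission
  imports Defs "HOL-Library.FuncSet"
begin

text \<open>In the coordinates y = (x_0, ..., x_(m-1)) and z = y + (x_m, ..., x_(2m-1)) the function is
  y \<cdot> (z + 1) + \<gamma>(z), a Maiorana-McFarland function: summing first over y, every Walsh
  coefficient collapses to a single term \<plusminus>2^m. The cyclic shift of the 2m coordinates carries
  each pair (x_i, x_(i+m)) to the next pair, swapped only at the wrap-around, so it acts on
  \<Sum> x_i x_(i+m) and on z as the cyclic shift of m coordinates. Finally the algebraic normal form
  of f is explicit: the quadratic monomials x_i x_(i+m) together with the expansions of
  \<Prod>_(i\<in>u) (x_i + x_(i+m)) over the monomials u of \<gamma>. These expansions are pairwise
  disjoint, preserve degrees, and never contain some x_i x_(i+m), so deg f = max 2 d.\<close>

section \<open>Parity and character sums\<close>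

lemma odd_card_filter_xor:
  assumes "finite A"
  shows "odd (card {a\<in>A. P a \<noteq> Q a}) \<longleftrightarrow> odd (card {a\<in>A. P a}) \<noteq> odd (card {a\<in>A. Q a})"
  using assms
proof (induction A rule: finite_induct)
  case (insert a A)
  have "{x\<in>insert a A. R x} = (if R a then insert a {x\<in>A. R x} else {x\<in>A. R x})" for R
    by auto
  with insert show ?case by simp
qed simp

definition parity :: "nat \<Rightarrow> (nat \<Rightarrow> bool) \<Rightarrow> bool" where
  "parity m P \<longleftrightarrow> odd (card {i. i < m \<and> P i})"

lemma parity_0 [simp]: "\<not> parity 0 P"
  by (simp add: parity_def)

lemma parity_Suc [simp]: "parity (Suc m) P \<longleftrightarrow> parity m P \<noteq> P m"
proof -
  have "{i. i < Suc m \<and> P i} = (if P m then insert m {i. i < m \<and> P i} else {i. i < m \<and> P i})"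
    by (auto simp: less_Suc_eq)
  then show ?thesis by (simp add: parity_def)
qed

lemma parity_cong [cong]:
  "m = m' \<Longrightarrow> (\<And>i. i < m' \<Longrightarrow> P i = Q i) \<Longrightarrow> parity m P = parity m' Q"
  by (induction m arbitrary: m') auto

lemma parity_xor: "parity m (\<lambda>i. P i \<noteq> Q i) \<longleftrightarrow> parity m P \<noteq> parity m Q"
  by (induction m) auto

lemma parity_add: "parity (m + k) P \<longleftrightarrow> parity m P \<noteq> parity k (\<lambda>i. P (i + m))"
  by (induction k) (auto simp: add.commute)

lemma parity_rotate: "parity m (\<lambda>i. P ((i + 1) mod m)) = parity m P"
proof (cases m)
  case (Suc k)
  have "parity (k + 1) (\<lambda>i. P ((i + 1) mod m)) = parity (1 + k) P"
    unfolding parity_add using Suc by auto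
  then show ?thesis using Suc by simp
qed simp

definition sign :: "bool \<Rightarrow> int" where
  "sign p = (if p then -1 else 1)"

lemma sign_xor: "sign (p \<noteq> q) = sign p * sign q"
  by (simp add: sign_def)

lemma vecs_eq_Pow: "vecs m = (\<lambda>A i. i \<in> A) ` Pow {..<m}"
proof
  show "vecs m \<subseteq> (\<lambda>A i. i \<in> A) ` Pow {..<m}"
  proof
    fix x assume "x \<in> vecs m"
    then have "x = (\<lambda>i. i \<in> {i. x i})" "{i. x i} \<in> Pow {..<m}"
      unfolding vecs_def by (auto simp: not_le[symmetric])
    then show "x \<in> (\<lambda>A i. i \<in> A) ` Pow {..<m}" by blast
  qed
qed (auto simp: vecs_def)

lemma vecs_less: "x \<in> vecs n \<Longrightarrow> x i \<Longrightarrow> i < n"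
  by (auto simp: vecs_def not_le [symmetric])

lemma finite_vecs: "finite (vecs m)"
  by (simp add: vecs_eq_Pow)

lemma vecs_Suc: "vecs (Suc m) = vecs m \<union> (\<lambda>X. X(m := True)) ` vecs m"
proof
  show "vecs (Suc m) \<subseteq> vecs m \<union> (\<lambda>X. X(m := True)) ` vecs m"
  proof
    fix x assume x: "x \<in> vecs (Suc m)"
    then have "x(m := False) \<in> vecs m"
      by (auto simp: vecs_def)
    moreover have "x = (if x m then (x(m := False))(m := True) else x(m := False))"
      by (auto simp: fun_eq_iff)
    ultimately show "x \<in> vecs m \<union> (\<lambda>X. X(m := True)) ` vecs m"
      by (metis (no_types, lifting) UnI1 UnI2 image_eqI)
  qed
qed (auto simp: vecs_def)

lemma sum_vecs_Suc:
  "(\<Sum>X\<in>vecs (Suc m). h X) = (\<Sum>X\<in>vecs m. h X) + (\<Sum>X\<in>vecs m. h (X(m := True)))"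
proof -
  have "inj_on (\<lambda>X. X(m := True)) (vecs m)"
    by (rule inj_onI) (auto simp: vecs_def fun_eq_iff split: if_splits)
  moreover have "vecs m \<inter> (\<lambda>X. X(m := True)) ` vecs m = {}"
    by (auto simp: vecs_def)
  ultimately show ?thesis
    by (simp add: vecs_Suc sum.union_disjoint finite_vecs sum.reindex)
qed

lemma sum_vecs_sign_parity:
  "(\<Sum>X\<in>vecs m. sign (parity m (\<lambda>i. X i \<and> T i))) = (if \<forall>i<m. \<not> T i then 2 ^ m else 0)"
proof (induction m)
  case 0
  have "vecs 0 = {\<lambda>i. False}" by (auto simp: vecs_def)
  then show ?case by (simp add: sign_def)
next
  case (Suc m)
  let ?S = "\<lambda>m X. sign (parity m (\<lambda>i. X i \<and> T i))"
  have "(\<Sum>X\<in>vecs m. ?S (Suc m) X) = (\<Sum>X\<in>vecs m. ?S m X)"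
    by (rule sum.cong) (auto simp: vecs_def)
  moreover have "(\<Sum>X\<in>vecs m. ?S (Suc m) (X(m := True))) = (\<Sum>X\<in>vecs m. ?S m X * sign (T m))"
    by (rule sum.cong) (simp_all add: sign_xor [symmetric])
  ultimately have "(\<Sum>X\<in>vecs (Suc m). ?S (Suc m) X) = (\<Sum>X\<in>vecs m. ?S m X) * (1 + sign (T m))"
    by (simp add: sum_vecs_Suc distrib_left sum_distrib_right)
  then show ?case using Suc.IH by (auto simp: sign_def less_Suc_eq)
qed

section \<open>The Walsh transform\<close>

lemma walsh_eq_sum_sign:
  "walsh n f b = (\<Sum>x\<in>vecs n. sign (f x \<noteq> parity n (\<lambda>i. x i \<and> b i)))"
  unfolding walsh_def parity_def by (intro sum.cong) (auto simp: sign_def)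

definition half_sum :: "nat \<Rightarrow> (nat \<Rightarrow> bool) \<Rightarrow> nat \<Rightarrow> bool" where
  "half_sum m x = (\<lambda>i. if i < m then x i \<noteq> x (i + m) else False)"

definition half_inner :: "nat \<Rightarrow> (nat \<Rightarrow> bool) \<Rightarrow> bool" where
  "half_inner m x \<longleftrightarrow> parity m (\<lambda>i. x i \<and> x (i + m))"

definition mm_fun :: "nat \<Rightarrow> ((nat \<Rightarrow> bool) \<Rightarrow> bool) \<Rightarrow> (nat \<Rightarrow> bool) \<Rightarrow> bool" where
  "mm_fun m g x \<longleftrightarrow> half_inner m x \<noteq> g (half_sum m x)"

definition join_halves :: "nat \<Rightarrow> (nat \<Rightarrow> bool) \<Rightarrow> (nat \<Rightarrow> bool) \<Rightarrow> nat \<Rightarrow> bool" where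
  "join_halves m X S = (\<lambda>i. if i < m then X i else i < 2 * m \<and> X (i - m) \<noteq> S (i - m))"

lemma join_halves_low [simp]: "i < m \<Longrightarrow> join_halves m X S i = X i"
  by (simp add: join_halves_def)

lemma join_halves_high [simp]: "i < m \<Longrightarrow> join_halves m X S (i + m) = (X i \<noteq> S i)"
  by (simp add: join_halves_def)

lemma bij_betw_join_halves:
  "bij_betw (\<lambda>(X, S). join_halves m X S) (vecs m \<times> vecs m) (vecs (2 * m))"
proof (rule bij_betw_byWitness[where f' = "\<lambda>x. (\<lambda>i. i < m \<and> x i, half_sum m x)"])
  have "join_halves m (\<lambda>i. i < m \<and> x i) (half_sum m x) i = x i" if "x \<in> vecs (2 * m)" for x i
    using that vecs_less [OF that, of i] by (cases "i < m") (auto simp: join_halves_def half_sum_def)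
  then show "\<forall>x\<in>vecs (2 * m). (\<lambda>(X, S). join_halves m X S) (\<lambda>i. i < m \<and> x i, half_sum m x) = x"
    by auto
qed (auto simp: join_halves_def half_sum_def vecs_def fun_eq_iff)

lemma half_sum_join_halves:
  assumes "S \<in> vecs m"
  shows "half_sum m (join_halves m X S) = S"
  unfolding half_sum_def fun_eq_iff using vecs_less [OF assms] by auto

lemma half_inner_join_halves: "half_inner m (join_halves m X S) = parity m (\<lambda>i. X i \<and> \<not> S i)"
  unfolding half_inner_def by (rule parity_cong) auto

lemma parity_join_halves:
  "parity (2 * m) (\<lambda>i. join_halves m X S i \<and> b i)
     \<longleftrightarrow> parity m (\<lambda>i. X i \<and> b i) \<noteq> parity m (\<lambda>i. (X i \<noteq> S i) \<and> b (i + m))"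
  by (simp add: mult_2 parity_add)

text \<open>join_halves m X S is the vector with y = X and z = S, where the Walsh exponent of
  mm_fun is linear in X.\<close>

lemma mm_fun_join_halves_sign:
  assumes "S \<in> vecs m"
  shows "(mm_fun m g (join_halves m X S) \<noteq> parity (2 * m) (\<lambda>i. join_halves m X S i \<and> b i))
    \<longleftrightarrow> parity m (\<lambda>i. X i \<and> (S i = (b i \<noteq> b (i + m)))) \<noteq> (g S \<noteq> parity m (\<lambda>i. S i \<and> b (i + m)))"
proof -
  have "parity m (\<lambda>i. X i \<and> (S i = (b i \<noteq> b (i + m))))
      = parity m (\<lambda>i. (((X i \<and> \<not> S i) \<noteq> (X i \<and> b i)) \<noteq> ((X i \<noteq> S i) \<and> b (i + m))) \<noteq> (S i \<and> b (i + m)))"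
    by (rule parity_cong) auto
  then show ?thesis
    unfolding mm_fun_def half_sum_join_halves [OF assms] half_inner_join_halves parity_join_halves
      parity_xor by auto
qed

lemma walsh_mm_fun:
  fixes m :: nat and b :: "nat \<Rightarrow> bool"
  defines "D \<equiv> \<lambda>i. i < m \<and> b i = b (i + m)"
  shows "walsh (2 * m) (mm_fun m g) b = sign (g D \<noteq> parity m (\<lambda>i. D i \<and> b (i + m))) * 2 ^ m"
proof -
  let ?e = "\<lambda>S. sign (g S \<noteq> parity m (\<lambda>i. S i \<and> b (i + m)))"
  let ?T = "\<lambda>S i. S i = (b i \<noteq> b (i + m))"
  have D_iff: "(\<forall>i<m. \<not> ?T S i) \<longleftrightarrow> S = D" if "S \<in> vecs m" for S
    using that by (auto simp: D_def vecs_def fun_eq_iff not_le [symmetric])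
  have "walsh (2 * m) (mm_fun m g) b
      = (\<Sum>(X, S)\<in>vecs m \<times> vecs m. sign (mm_fun m g (join_halves m X S)
                                         \<noteq> parity (2 * m) (\<lambda>i. join_halves m X S i \<and> b i)))"
    unfolding walsh_eq_sum_sign
    by (subst sum.reindex_bij_betw [OF bij_betw_join_halves, symmetric]) (simp add: split_def)
  also have "\<dots> = (\<Sum>S\<in>vecs m. \<Sum>X\<in>vecs m. sign (mm_fun m g (join_halves m X S)
                                         \<noteq> parity (2 * m) (\<lambda>i. join_halves m X S i \<and> b i)))"
    unfolding sum.cartesian_product [symmetric] by (rule sum.swap)
  also have "\<dots> = (\<Sum>S\<in>vecs m. \<Sum>X\<in>vecs m. sign (parity m (\<lambda>i. X i \<and> ?T S i)) * ?e S)"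
    by (intro sum.cong refl) (simp only: mm_fun_join_halves_sign sign_xor)
  also have "\<dots> = (\<Sum>S\<in>vecs m. if S = D then ?e S * 2 ^ m else 0)"
  proof (rule sum.cong [OF refl])
    fix S assume "S \<in> vecs m"
    then show "(\<Sum>X\<in>vecs m. sign (parity m (\<lambda>i. X i \<and> ?T S i)) * ?e S)
        = (if S = D then ?e S * 2 ^ m else 0)"
      by (simp only: sum_distrib_right [symmetric] sum_vecs_sign_parity D_iff) simp
  qed
  also have "\<dots> = ?e D * 2 ^ m"
    by (simp add: finite_vecs) (simp add: D_def vecs_def)
  finally show ?thesis .
qed

lemma bent_mm_fun: "bent (2 * m) (mm_fun m g)"
  by (simp add: bent_def walsh_mm_fun abs_mult sign_def)

section \<open>Rotation symmetry\<close>

text \<open>The shift on 2m coordinates moves the pair (i, i + m) to the pair ((i + 1) mod m, \<dots>),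
  swapping its two entries exactly when i = m - 1.\<close>

lemma rot_double_pair:
  assumes "i < m"
  defines "j \<equiv> (i + 1) mod m"
  shows "(rot (2 * m) x i \<and> rot (2 * m) x (i + m)) \<longleftrightarrow> x j \<and> x (j + m)"
    and "(rot (2 * m) x i \<noteq> rot (2 * m) x (i + m)) \<longleftrightarrow> x j \<noteq> x (j + m)"
proof -
  consider "i + 1 < m" | "i + 1 = m" using assms by linarith
  then have "rot (2 * m) x i = x j \<and> rot (2 * m) x (i + m) = x (j + m)
           \<or> rot (2 * m) x i = x (j + m) \<and> rot (2 * m) x (i + m) = x j"
  proof cases
    case 1
    then show ?thesis by (simp add: rot_def j_def mod_if)
  next
    case 2
    then have "i + m + 1 = 2 * m" by simp
    with 2 have "(i + 1) mod (2 * m) = 0 + m" "(i + m + 1) mod (2 * m) = 0" "j = 0"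
      by (simp_all only: j_def) simp_all
    then show ?thesis using assms by (simp add: rot_def)
  qed
  then show "(rot (2 * m) x i \<and> rot (2 * m) x (i + m)) \<longleftrightarrow> x j \<and> x (j + m)"
    and "(rot (2 * m) x i \<noteq> rot (2 * m) x (i + m)) \<longleftrightarrow> x j \<noteq> x (j + m)"
    by auto
qed

lemma half_inner_rot: "half_inner m (rot (2 * m) x) = half_inner m x"
proof -
  have "half_inner m (rot (2 * m) x) = parity m (\<lambda>i. x ((i + 1) mod m) \<and> x ((i + 1) mod m + m))"
    unfolding half_inner_def by (rule parity_cong) (simp_all add: rot_double_pair)
  then show ?thesis
    unfolding half_inner_def by (simp only: parity_rotate [of m "\<lambda>j. x j \<and> x (j + m)"])
qed

lemma half_sum_rot: "half_sum m (rot (2 * m) x) = rot m (half_sum m x)"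
proof
  fix i
  show "half_sum m (rot (2 * m) x) i = rot m (half_sum m x) i"
    using rot_double_pair(2) [of i m x] by (cases "i < m") (simp_all add: half_sum_def rot_def [of m])
qed

lemma half_sum_in_vecs: "half_sum m x \<in> vecs m"
  by (simp add: half_sum_def vecs_def)

lemma rotation_symmetric_mm_fun:
  assumes "rotation_symmetric m g"
  shows "rotation_symmetric (2 * m) (mm_fun m g)"
  using assms half_sum_in_vecs
  by (simp add: rotation_symmetric_def mm_fun_def half_inner_rot half_sum_rot)

section \<open>The algebraic normal form\<close>

lemma anf_eval_xor: "anf_eval n (\<lambda>u. c u \<noteq> c' u) x \<longleftrightarrow> anf_eval n c x \<noteq> anf_eval n c' x"
proof -
  let ?A = "{u. u \<subseteq> {..<n} \<and> (\<forall>i\<in>u. x i)}"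
  have fin: "finite ?A" by (rule finite_subset [of _ "Pow {..<n}"]) auto
  have "{u. u \<subseteq> {..<n} \<and> P u \<and> (\<forall>i\<in>u. x i)} = {u\<in>?A. P u}" for P by blast
  then show ?thesis
    unfolding anf_eval_def by (simp only: odd_card_filter_xor [OF fin])
qed

lemma anf_eval_monomial:
  assumes "w \<subseteq> {..<n}"
  shows "anf_eval n (\<lambda>v. v = w) x \<longleftrightarrow> (\<forall>i\<in>w. x i)"
proof -
  have "{v. v \<subseteq> {..<n} \<and> v = w \<and> (\<forall>i\<in>v. x i)} = (if \<forall>i\<in>w. x i then {w} else {})"
    using assms by auto
  then show ?thesis by (simp add: anf_eval_def)
qed

lemma anf_eval_disjoint_Union:
  assumes "finite U" and disjoint: "\<And>u u' v. u \<in> U \<Longrightarrow> u' \<in> U \<Longrightarrow> C u v \<Longrightarrow> C u' v \<Longrightarrow> u = u'"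
  shows "anf_eval n (\<lambda>v. \<exists>u\<in>U. C u v) x \<longleftrightarrow> odd (card {u\<in>U. anf_eval n (C u) x})"
proof -
  let ?M = "\<lambda>u. {v. v \<subseteq> {..<n} \<and> C u v \<and> (\<forall>i\<in>v. x i)}"
  have "finite (?M u)" for u by (rule finite_subset [of _ "Pow {..<n}"]) auto
  then have "card (\<Union>u\<in>U. ?M u) = (\<Sum>u\<in>U. card (?M u))"
    using assms by (intro card_UN_disjoint) auto
  moreover have "{v. v \<subseteq> {..<n} \<and> (\<exists>u\<in>U. C u v) \<and> (\<forall>i\<in>v. x i)} = (\<Union>u\<in>U. ?M u)"
    by blast
  ultimately show ?thesis
    unfolding anf_eval_def using even_sum_iff [OF \<open>finite U\<close>] by simp
qed

text \<open>A nonzero polynomial does not vanish at the indicator vector of a monomial of minimal size.\<close>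

lemma anf_eval_vanishes_imp_zero:
  assumes "is_anf n e" and vanishes: "\<And>x. x \<in> vecs n \<Longrightarrow> \<not> anf_eval n e x"
  shows "\<not> e u"
proof
  assume "e u"
  then obtain w where w: "e w" and min: "\<And>v. e v \<Longrightarrow> card w \<le> card v"
    using ex_has_least_nat [of e u card] by blast
  have sub: "w \<subseteq> {..<n}" using assms(1) w by (auto simp: is_anf_def)
  then have "finite w" by (rule finite_subset) simp
  have "{v. v \<subseteq> {..<n} \<and> e v \<and> (\<forall>i\<in>v. i \<in> w)} = {w}"
  proof (intro equalityI subsetI)
    fix v assume "v \<in> {v. v \<subseteq> {..<n} \<and> e v \<and> (\<forall>i\<in>v. i \<in> w)}"
    then have "v \<subseteq> w" "e v" by auto
    then show "v \<in> {w}" using min [of v] \<open>finite w\<close> by (simp add: card_seteq)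
  qed (use w sub in auto)
  then have "anf_eval n e (\<lambda>i. i \<in> w)" by (simp add: anf_eval_def)
  moreover have "(\<lambda>i. i \<in> w) \<in> vecs n" using sub by (auto simp: vecs_def)
  ultimately show False using vanishes by blast
qed

lemma anf_of_eqI:
  assumes "is_anf n c" and "\<And>x. x \<in> vecs n \<Longrightarrow> anf_eval n c x = f x"
  shows "anf_of n f = c"
  unfolding anf_of_def
proof (rule the_equality)
  fix c' assume c': "is_anf n c' \<and> (\<forall>x\<in>vecs n. anf_eval n c' x = f x)"
  have "\<not> (c' u \<noteq> c u)" for u
  proof (rule anf_eval_vanishes_imp_zero)
    show "is_anf n (\<lambda>u. c' u \<noteq> c u)" using c' assms(1) by (auto simp: is_anf_def)
    fix x assume "x \<in> vecs n"
    then show "\<not> anf_eval n (\<lambda>u. c' u \<noteq> c u) x"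
      unfolding anf_eval_xor using c' assms(2) by simp
  qed
  then show "c' = c" by blast
qed (use assms in blast)

text \<open>The monomials of \<Prod>_(i\<in>u) (X_i + X_(i+m)), one for each choice of a variable from
  every factor.\<close>

definition pair_expansion :: "nat \<Rightarrow> nat set \<Rightarrow> nat set set" where
  "pair_expansion m u = (\<lambda>\<phi>. \<phi> ` u) ` PiE u (\<lambda>i. {i, i + m})"

lemma pair_choice_mod:
  fixes m :: nat
  assumes "\<phi> \<in> PiE u (\<lambda>i. {i, i + m})" "u \<subseteq> {..<m}" "i \<in> u"
  shows "\<phi> i mod m = i"
proof -
  have "\<phi> i \<in> {i, i + m}" "i < m" using assms by (auto simp: PiE_def Pi_def)
  then show ?thesis by auto
qed

lemma inj_on_image_pair_choice:
  fixes m :: nat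
  assumes "u \<subseteq> {..<m}"
  shows "inj_on (\<lambda>\<phi>. \<phi> ` u) (PiE u (\<lambda>i. {i, i + m}))"
proof (rule inj_onI)
  fix \<phi> \<psi> assume \<phi>: "\<phi> \<in> PiE u (\<lambda>i. {i, i + m})" and \<psi>: "\<psi> \<in> PiE u (\<lambda>i. {i, i + m})"
    and eq: "\<phi> ` u = \<psi> ` u"
  show "\<phi> = \<psi>"
  proof (rule PiE_ext [OF \<phi> \<psi>])
    fix i assume "i \<in> u"
    then obtain k where "k \<in> u" "\<phi> i = \<psi> k" using eq by blast
    with \<open>i \<in> u\<close> show "\<phi> i = \<psi> i"
      using pair_choice_mod [OF \<phi> assms] pair_choice_mod [OF \<psi> assms] by metis
  qed
qed

lemma pair_expansion_mod:
  assumes "v \<in> pair_expansion m u" "u \<subseteq> {..<m}"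
  shows "(\<lambda>j. j mod m) ` v = u"
proof -
  obtain \<phi> where \<phi>: "\<phi> \<in> PiE u (\<lambda>i. {i, i + m})" and v: "v = \<phi> ` u"
    using assms(1) by (auto simp: pair_expansion_def)
  have "(\<lambda>j. j mod m) ` v = (\<lambda>i. \<phi> i mod m) ` u" by (simp add: v image_image)
  also have "\<dots> = u" using pair_choice_mod [OF \<phi> assms(2)] by simp
  finally show ?thesis .
qed

lemma pair_expansion_subset:
  assumes "v \<in> pair_expansion m u" "u \<subseteq> {..<m}"
  shows "v \<subseteq> {..<2 * m}"
proof
  fix j assume "j \<in> v"
  then obtain \<phi> i where "\<phi> \<in> PiE u (\<lambda>i. {i, i + m})" "i \<in> u" "j = \<phi> i"
    using assms(1) by (auto simp: pair_expansion_def)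
  then have "j \<in> {i, i + m}" "i < m" using assms(2) by (auto simp: PiE_def Pi_def)
  then show "j \<in> {..<2 * m}" by auto
qed

lemma card_pair_expansion:
  assumes "v \<in> pair_expansion m u" "u \<subseteq> {..<m}"
  shows "card v = card u"
proof -
  obtain \<phi> where \<phi>: "\<phi> \<in> PiE u (\<lambda>i. {i, i + m})" and v: "v = \<phi> ` u"
    using assms(1) by (auto simp: pair_expansion_def)
  have "inj_on \<phi> u"
    by (rule inj_onI) (metis pair_choice_mod [OF \<phi> assms(2)])
  then show ?thesis by (simp add: v card_image)
qed

lemma self_in_pair_expansion: "u \<in> pair_expansion m u"
  unfolding pair_expansion_def by (rule image_eqI [of _ _ "restrict id u"]) auto

lemma odd_card_filter_pair:
  assumes "a \<noteq> b"
  shows "odd (card {j \<in> {a, b}. P j}) \<longleftrightarrow> P a \<noteq> P b"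
proof -
  have "{j \<in> {a, b}. P j} = (if P a then {a} else {}) \<union> (if P b then {b} else {})"
    by auto
  then show ?thesis using assms by simp
qed

lemma anf_eval_pair_expansion:
  assumes "u \<subseteq> {..<m}"
  shows "anf_eval (2 * m) (\<lambda>v. v \<in> pair_expansion m u) x \<longleftrightarrow> (\<forall>i\<in>u. x i \<noteq> x (i + m))"
proof -
  let ?B = "\<lambda>i. {j \<in> {i, i + m}. x j}"
  have "finite u" using assms finite_subset by blast
  have sub: "PiE u ?B \<subseteq> PiE u (\<lambda>i. {i, i + m})" by (auto simp: PiE_def Pi_def)
  have "{v. v \<subseteq> {..<2 * m} \<and> v \<in> pair_expansion m u \<and> (\<forall>j\<in>v. x j)} = (\<lambda>\<phi>. \<phi> ` u) ` PiE u ?B"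
    using pair_expansion_subset [OF _ assms] sub
    by (auto simp: pair_expansion_def PiE_def Pi_def)
  moreover have "card ((\<lambda>\<phi>. \<phi> ` u) ` PiE u ?B) = card (PiE u ?B)"
    by (rule card_image, rule inj_on_subset [OF inj_on_image_pair_choice [OF assms] sub])
  moreover have "card (PiE u ?B) = (\<Prod>i\<in>u. card (?B i))"
    using \<open>finite u\<close> by (rule card_PiE)
  moreover have "odd (card (?B i)) \<longleftrightarrow> x i \<noteq> x (i + m)" if "i \<in> u" for i
    using that assms by (intro odd_card_filter_pair) auto
  ultimately show ?thesis
    unfolding anf_eval_def using \<open>finite u\<close> by (simp add: even_prod_iff)
qed

definition mm_anf :: "nat \<Rightarrow> (nat set \<Rightarrow> bool) \<Rightarrow> nat set \<Rightarrow> bool" where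
  "mm_anf m c v \<longleftrightarrow> (\<exists>i\<in>{..<m}. v = {i, i + m}) \<noteq> (\<exists>u\<in>{u. c u}. v \<in> pair_expansion m u)"

lemma anf_eval_mm_anf:
  assumes "is_anf m c"
  shows "anf_eval (2 * m) (mm_anf m c) x \<longleftrightarrow> mm_fun m (anf_eval m c) x"
proof -
  have sub: "u \<subseteq> {..<m}" if "c u" for u using assms that by (auto simp: is_anf_def)
  have fin: "finite {u. c u}" by (rule finite_subset [of _ "Pow {..<m}"]) (use sub in auto)
  have "anf_eval (2 * m) (\<lambda>v. \<exists>i\<in>{..<m}. v = {i, i + m}) x
      \<longleftrightarrow> odd (card {i \<in> {..<m}. anf_eval (2 * m) (\<lambda>v. v = {i, i + m}) x})"
    by (rule anf_eval_disjoint_Union) auto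
  also have "{i \<in> {..<m}. anf_eval (2 * m) (\<lambda>v. v = {i, i + m}) x} = {i. i < m \<and> x i \<and> x (i + m)}"
    by (auto simp: anf_eval_monomial)
  also have "odd (card \<dots>) \<longleftrightarrow> half_inner m x"
    by (simp add: half_inner_def parity_def)
  finally have quadratic: "anf_eval (2 * m) (\<lambda>v. \<exists>i\<in>{..<m}. v = {i, i + m}) x \<longleftrightarrow> half_inner m x" .
  have "anf_eval (2 * m) (\<lambda>v. \<exists>u\<in>{u. c u}. v \<in> pair_expansion m u) x
      \<longleftrightarrow> odd (card {u \<in> {u. c u}. anf_eval (2 * m) (\<lambda>v. v \<in> pair_expansion m u) x})"
    using fin by (rule anf_eval_disjoint_Union) (metis mem_Collect_eq pair_expansion_mod sub)
  also have "{u \<in> {u. c u}. anf_eval (2 * m) (\<lambda>v. v \<in> pair_expansion m u) x}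
      = {u. u \<subseteq> {..<m} \<and> c u \<and> (\<forall>i\<in>u. half_sum m x i)}"
    using sub by (auto simp: anf_eval_pair_expansion half_sum_def)
  finally have "anf_eval (2 * m) (\<lambda>v. \<exists>u\<in>{u. c u}. v \<in> pair_expansion m u) x
      \<longleftrightarrow> anf_eval m c (half_sum m x)"
    by (simp add: anf_eval_def)
  with quadratic show ?thesis
    unfolding mm_anf_def anf_eval_xor mm_fun_def by simp
qed

lemma is_anf_mm_anf:
  assumes "is_anf m c"
  shows "is_anf (2 * m) (mm_anf m c)"
  unfolding is_anf_def
proof (intro allI impI)
  fix v assume "mm_anf m c v"
  then have "(\<exists>i<m. v = {i, i + m}) \<or> (\<exists>u. c u \<and> v \<in> pair_expansion m u)"
    by (auto simp: mm_anf_def)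
  then show "v \<subseteq> {..<2 * m}"
  proof
    assume "\<exists>u. c u \<and> v \<in> pair_expansion m u"
    then obtain u where "c u" "v \<in> pair_expansion m u" by blast
    with assms show ?thesis by (intro pair_expansion_subset) (auto simp: is_anf_def)
  qed auto
qed

lemma anf_of_mm_fun:
  assumes "is_anf m c"
  shows "anf_of (2 * m) (mm_fun m (anf_eval m c)) = mm_anf m c"
  using is_anf_mm_anf [OF assms] anf_eval_mm_anf [OF assms] by (rule anf_of_eqI)

lemma anf_degree_mm_anf:
  assumes "m \<ge> 1" "is_anf m c"
  shows "anf_degree (mm_anf m c) = max 2 (anf_degree c)"
proof -
  have sub: "u \<subseteq> {..<m}" if "c u" for u using assms(2) that by (auto simp: is_anf_def)
  define A where "A = card ` {u. c u}"
  let ?Q = "{v. \<exists>i\<in>{..<m}. v = {i, i + m}}" and ?G = "{v. \<exists>u\<in>{u. c u}. v \<in> pair_expansion m u}"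
  have "\<not> (v \<in> ?Q \<and> v \<in> ?G)" for v
  proof
    assume "v \<in> ?Q \<and> v \<in> ?G"
    then obtain i u where i: "i < m" "v = {i, i + m}" and u: "c u" "v \<in> pair_expansion m u"
      by auto
    then have "u = {i}" using pair_expansion_mod [OF u(2) sub [OF u(1)]] by simp
    then show False using card_pair_expansion [OF u(2) sub [OF u(1)]] i assms(1) by simp
  qed
  then have support: "{v. mm_anf m c v} = ?Q \<union> ?G" by (auto simp: mm_anf_def)
  have card_Q: "card ` ?Q = {2}"
  proof -
    have "?Q = (\<lambda>i. {i, i + m}) ` {..<m}" by auto
    also have "card ` \<dots> = (\<lambda>i. 2) ` {..<m}"
      using assms(1) by (simp add: image_image numeral_2_eq_2)
    finally show ?thesis using assms(1) by (simp add: image_constant_conv lessThan_empty_iff)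
  qed
  have card_G: "card ` ?G = A"
    unfolding A_def
  proof (intro equalityI image_subsetI)
    fix v assume "v \<in> ?G"
    then obtain u where "c u" "v \<in> pair_expansion m u" by auto
    then have "card v = card u" using sub by (intro card_pair_expansion)
    with \<open>c u\<close> show "card v \<in> card ` {u. c u}" by blast
  next
    fix u assume "u \<in> {u. c u}"
    then have "u \<in> ?G" using self_in_pair_expansion by blast
    then show "card u \<in> card ` ?G" by blast
  qed
  have "finite A"
    unfolding A_def by (rule finite_imageI, rule finite_subset [of _ "Pow {..<m}"]) (use sub in auto)
  have "anf_degree (mm_anf m c) = Max (insert 0 ({2} \<union> A))"
    unfolding anf_degree_def by (simp only: support image_Un card_Q card_G)
  also have "\<dots> = Max (insert 2 (insert 0 A))"
    by (simp add: insert_commute)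
  also have "\<dots> = max 2 (Max (insert 0 A))"
    using \<open>finite A\<close> by (intro Max_insert) auto
  finally show ?thesis by (simp add: anf_degree_def A_def)
qed

lemma alg_degree_mm_fun:
  "m \<ge> 1 \<Longrightarrow> is_anf m c \<Longrightarrow> alg_degree (2 * m) (mm_fun m (anf_eval m c)) = max 2 (anf_degree c)"
  by (simp add: alg_degree_def anf_of_mm_fun anf_degree_mm_anf)

theorem theorem1:
  fixes m n d :: nat and c :: "nat set \<Rightarrow> bool" and f :: "(nat \<Rightarrow> bool) \<Rightarrow> bool"
  assumes "m \<ge> 1" and "n = 2 * m"
    and "is_anf m c" and "d = anf_degree c"
    and "\<And>x. f x = (odd (card {i. i < m \<and> x i \<and> x (i + m)})
                 \<noteq> anf_eval m c (\<lambda>i. if i < m then x i \<noteq> x (i + m) else False))"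
  shows "bent n f
    \<and> (rotation_symmetric m (anf_eval m c) \<longrightarrow> rotation_symmetric n f \<and> bent n f)
    \<and> (d \<ge> 2 \<longrightarrow> alg_degree n f = d)"
proof -
  have f: "f = mm_fun m (anf_eval m c)"
    by (rule ext) (simp add: assms(5) mm_fun_def half_inner_def parity_def half_sum_def)
  have "bent n f" using bent_mm_fun by (simp add: f assms(2))
  moreover have "rotation_symmetric m (anf_eval m c) \<longrightarrow> rotation_symmetric n f"
    using rotation_symmetric_mm_fun by (simp add: f assms(2))
  moreover have "d \<ge> 2 \<longrightarrow> alg_degree n f = d"
    using alg_degree_mm_fun [OF assms(1,3)] by (simp add: f assms(2,4))
  ultimately show ?thesis by blast
qed

end
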